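(* Let $n\ge 2$, $N=\{1,\dots,n\}$, for each $i\in N$ let $A_i$ be a nonempty finite set, $A=\prod_{i\in N}A_i$, $u_i:A\to\mathbb{R}$, and fix $\lambda\in\mathbb{R}^n\setminus\{\mathbf 0\}$. For every $\Delta\in(0,1)$ and every $a^{[n]}\in\mathcal{A}^*_\lambda(\Delta)$, $$\frac{\partial W_\lambda}{\partial\Delta}(a^{[n]},\Delta)\le 0,$$ where the derivative is taken with respect to the second argument with $a^{[n]}$ held fixed.
   Context: For $a^{[n]}=(a^1,\dots,a^n)\in A^n$ extend indices by $a^s=a^{s-n}$ for $s\ge n+1$, and for $\Delta\in(0,1]$ define $$v_i^\Delta(a^{[n]})=\frac{\sum_{k=1}^n\Delta^{k-1}u_i(a^{i+k-1})}{\sum_{k=1}^n\Delta^{k-1}},\qquad W_\lambda(a^{[n]},\Delta)=\sum_{i=1}^n\lambda_i v_i^\Delta(a^{[n]}).$$ Let $\mathcal{A}^*_\lambda(\Delta)\subseteq A^n$ be the set of maximizers of $a^{[n]}\mapsto W_\lambda(a^{[n]},\Delta)$ over $A^n$. *)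

theory Defs
  imports "HOL-Analysis.Analysis"
begin

text \<open>Players are indexed 0..n-1 (paper: 1..n).
  A sequence a^[n] of n profiles is a function nat => profile, indices 0..n-1,
  extended cyclically via mod n.\<close>

definition profiles :: "nat \<Rightarrow> (nat \<Rightarrow> 'b set) \<Rightarrow> (nat \<Rightarrow> 'b) set" where
  "profiles n As = PiE {..<n} As"

definition seqs :: "nat \<Rightarrow> (nat \<Rightarrow> 'b set) \<Rightarrow> (nat \<Rightarrow> (nat \<Rightarrow> 'b)) set" where
  "seqs n As = PiE {..<n} (\<lambda>_. profiles n As)"

text \<open>v_i^Delta(a^[n]); with 0-based i,k the paper's a^{i+k-1} is a ((i+k) mod n).\<close>
definition vval :: "nat \<Rightarrow> (nat \<Rightarrow> (nat \<Rightarrow> 'b) \<Rightarrow> real) \<Rightarrow> (nat \<Rightarrow> (nat \<Rightarrow> 'b)) \<Rightarrow> real \<Rightarrow> nat \<Rightarrow> real" where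
  "vval n u a \<Delta> i = (\<Sum>k<n. \<Delta> ^ k * u i (a ((i + k) mod n))) / (\<Sum>k<n. \<Delta> ^ k)"

definition Wlam :: "nat \<Rightarrow> (nat \<Rightarrow> (nat \<Rightarrow> 'b) \<Rightarrow> real) \<Rightarrow> (nat \<Rightarrow> real) \<Rightarrow> (nat \<Rightarrow> (nat \<Rightarrow> 'b)) \<Rightarrow> real \<Rightarrow> real" where
  "Wlam n u lam a \<Delta> = (\<Sum>i<n. lam i * vval n u a \<Delta> i)"

definition maximizers :: "nat \<Rightarrow> (nat \<Rightarrow> 'b set) \<Rightarrow> (nat \<Rightarrow> (nat \<Rightarrow> 'b) \<Rightarrow> real) \<Rightarrow> (nat \<Rightarrow> real) \<Rightarrow> real \<Rightarrow> (nat \<Rightarrow> (nat \<Rightarrow> 'b)) set" where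
  "maximizers n As u lam \<Delta> =
     {a \<in> seqs n As. \<forall>b \<in> seqs n As. Wlam n u lam b \<Delta> \<le> Wlam n u lam a \<Delta>}"

end

theory Submission
  imports Defs
begin

text \<open>With \<open>c\<^sub>k = \<Sum>\<^sub>i \<lambda>\<^sub>i u\<^sub>i(a\<^sup>i\<^sup>+\<^sup>k)\<close>, the welfare \<open>W\<^sub>\<lambda>(a, \<Delta>)\<close> is the discounted mean \<open>V/S\<close>, where
  \<open>V = \<Sum>\<^sub>k\<^sub><\<^sub>n \<Delta>\<^sup>k c\<^sub>k\<close> and \<open>S = \<Sum>\<^sub>k\<^sub><\<^sub>n \<Delta>\<^sup>k\<close>; let \<open>T\<^sub>m\<close>, \<open>S\<^sub>m\<close> be the same sums over \<open>k < m\<close>.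
  Rotating the sequence \<open>a\<close> by \<open>m\<close> rotates the cycle \<open>c\<close>, and at a maximizer no rotation
  does better; this forces every prefix mean \<open>T\<^sub>m/S\<^sub>m\<close> to be at least the full mean \<open>V/S\<close>.
  Summation by parts gives \<open>\<Delta> (V' S - V S') = \<Sum>\<^sub>0\<^sub><\<^sub>m\<^sub><\<^sub>n (V S\<^sub>m - T\<^sub>m S)\<close>, so the derivative is
  nonpositive.\<close>

lemma sum_of_nat_mult_eq_sum_tails:
  fixes f :: "nat \<Rightarrow> 'a::ring_1"
  shows "(\<Sum>k<n. of_nat k * f k) = (\<Sum>m\<in>{1..<n}. (\<Sum>k<n. f k) - (\<Sum>k<m. f k))"
proof (induction n)
  case 0
  then show ?case by simp
next
  case (Suc n)
  show ?case
  proof (cases n)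
    case 0
    then show ?thesis by simp
  next
    case (Suc p)
    have "(\<Sum>m\<in>{1..<Suc n}. (\<Sum>k<Suc n. f k) - (\<Sum>k<m. f k))
        = (\<Sum>m\<in>{1..<n}. (\<Sum>k<Suc n. f k) - (\<Sum>k<m. f k)) + f n"
      using Suc by simp
    also have "(\<Sum>m\<in>{1..<n}. (\<Sum>k<Suc n. f k) - (\<Sum>k<m. f k))
        = (\<Sum>m\<in>{1..<n}. ((\<Sum>k<n. f k) - (\<Sum>k<m. f k)) + f n)"
      by (rule sum.cong) (simp_all add: algebra_simps)
    also have "\<dots> = (\<Sum>k<n. of_nat k * f k) + of_nat (n - 1) * f n"
      by (simp add: sum.distrib Suc.IH)
    finally show ?thesis
      using Suc by (simp add: algebra_simps)
  qed
qed

lemma power_mult_sum_rotate: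
  fixes c :: "nat \<Rightarrow> 'a::comm_ring_1"
  assumes "m \<le> n"
  shows "x ^ m * (\<Sum>k<n. x ^ k * c ((k + m) mod n)) =
    (\<Sum>k<n. x ^ k * c k) - (\<Sum>k<m. x ^ k * c k) + x ^ n * (\<Sum>k<m. x ^ k * c k)"
proof -
  have "x ^ m * (\<Sum>k<n. x ^ k * c ((k + m) mod n)) = (\<Sum>k<n. x ^ (k + m) * c ((k + m) mod n))"
    by (simp add: sum_distrib_left power_add algebra_simps)
  also have "\<dots> = (\<Sum>j\<in>{m..<n+m}. x ^ j * c (j mod n))"
    using sum.shift_bounds_nat_ivl[of "\<lambda>j. x ^ j * c (j mod n)" 0 m n]
    by (simp add: lessThan_atLeast0)
  also have "\<dots> = (\<Sum>j\<in>{m..<n}. x ^ j * c (j mod n)) + (\<Sum>j\<in>{n..<n+m}. x ^ j * c (j mod n))"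
    using assms by (intro sum.atLeastLessThan_concat[symmetric]) auto
  also have "(\<Sum>j\<in>{m..<n}. x ^ j * c (j mod n)) = (\<Sum>k<n. x ^ k * c k) - (\<Sum>k<m. x ^ k * c k)"
    using assms by (simp add: sum_diff_nat_ivl lessThan_atLeast0)
  also have "(\<Sum>j\<in>{n..<n+m}. x ^ j * c (j mod n)) = x ^ n * (\<Sum>k<m. x ^ k * c k)"
    using sum.shift_bounds_nat_ivl[of "\<lambda>j. x ^ j * c (j mod n)" 0 n m] assms
    by (auto simp: add.commute sum_distrib_left power_add lessThan_atLeast0 algebra_simps
        intro!: sum.cong)
  finally show ?thesis .
qed

lemma discounted_mean_le_prefix_mean:
  fixes c :: "nat \<Rightarrow> real"
  assumes "0 < x" "x < 1" "m \<le> n"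
    and rotate_le: "(\<Sum>k<n. x ^ k * c ((k + m) mod n)) \<le> (\<Sum>k<n. x ^ k * c k)"
  shows "(\<Sum>k<n. x ^ k * c k) * (\<Sum>k<m. x ^ k) \<le> (\<Sum>k<m. x ^ k * c k) * (\<Sum>k<n. x ^ k)"
proof -
  define V T where "V = (\<Sum>k<n. x ^ k * c k)" and "T = (\<Sum>k<m. x ^ k * c k)"
  have "V - T + x ^ n * T \<le> x ^ m * V"
    using mult_left_mono[OF rotate_le, of "x ^ m"] assms(1)
    unfolding power_mult_sum_rotate[OF \<open>m \<le> n\<close>] V_def T_def by simp
  then have "V * (1 - x ^ m) \<le> T * (1 - x ^ n)"
    by (simp add: algebra_simps)
  then have "(1 - x) * (V * (\<Sum>k<m. x ^ k)) \<le> (1 - x) * (T * (\<Sum>k<n. x ^ k))"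
    by (simp add: one_diff_power_eq ac_simps)
  then show ?thesis
    using \<open>x < 1\<close> unfolding V_def T_def by simp
qed

lemma mult_sum_power_deriv_eq_sum_tails:
  fixes c :: "nat \<Rightarrow> real"
  shows "x * (\<Sum>k<n. real k * x ^ (k - 1) * c k) =
    (\<Sum>m\<in>{1..<n}. (\<Sum>k<n. x ^ k * c k) - (\<Sum>k<m. x ^ k * c k))"
proof -
  have "x * (\<Sum>k<n. real k * x ^ (k - 1) * c k) = (\<Sum>k<n. real k * (x ^ k * c k))"
    unfolding sum_distrib_left by (rule sum.cong) (auto simp: power_eq_if)
  then show ?thesis
    by (simp only: sum_of_nat_mult_eq_sum_tails)
qed

lemma deriv_discounted_mean_nonpos:
  fixes c :: "nat \<Rightarrow> real"
  assumes "0 < x" "x < 1" "0 < n"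
    and rotate_le: "\<And>m. m < n \<Longrightarrow> (\<Sum>k<n. x ^ k * c ((k + m) mod n)) \<le> (\<Sum>k<n. x ^ k * c k)"
  shows "deriv (\<lambda>y. (\<Sum>k<n. y ^ k * c k) / (\<Sum>k<n. y ^ k)) x \<le> 0"
proof -
  define V V' :: "(nat \<Rightarrow> real) \<Rightarrow> real \<Rightarrow> real"
    where "V = (\<lambda>b y. \<Sum>k<n. y ^ k * b k)"
      and "V' = (\<lambda>b y. \<Sum>k<n. real k * y ^ (k - 1) * b k)"
  define T :: "(nat \<Rightarrow> real) \<Rightarrow> nat \<Rightarrow> real" where "T = (\<lambda>b m. \<Sum>k<m. x ^ k * b k)"
  define S S' where "S = V (\<lambda>_. 1)" and "S' = V' (\<lambda>_. 1)"
  have S_eq: "(\<Sum>k<n. y ^ k) = S y" for y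
    by (simp add: S_def V_def)
  have S_pos: "S x > 0"
    using assms(1,3) by (auto simp: S_def V_def intro!: sum_pos)
  have V_deriv: "(V b has_real_derivative V' b y) (at y)" for b y
    unfolding V_def V'_def by (auto intro!: derivative_eq_intros simp: algebra_simps)
  have tails: "x * V' b x = (\<Sum>m\<in>{1..<n}. V b x - T b m)" for b
    unfolding V_def V'_def T_def by (rule mult_sum_power_deriv_eq_sum_tails)
  have "x * (V' c x * S x - V c x * S' x) = (x * V' c x) * S x - V c x * (x * S' x)"
    by (simp add: algebra_simps)
  also have "\<dots> = (\<Sum>m\<in>{1..<n}. V c x * T (\<lambda>_. 1) m - T c m * S x)"
    unfolding S'_def tails S_def[symmetric] sum_distrib_left sum_distrib_right
      sum_subtractf[symmetric]
    by (simp add: algebra_simps)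
  also have "\<dots> \<le> 0"
    using discounted_mean_le_prefix_mean[OF assms(1,2) _ rotate_le]
    by (intro sum_nonpos) (simp add: V_def T_def S_def)
  finally have "V' c x * S x - V c x * S' x \<le> 0"
    using \<open>0 < x\<close> by (simp add: mult_le_0_iff)
  moreover have "deriv (\<lambda>y. V c y / S y) x = (V' c x * S x - V c x * S' x) / (S x * S x)"
    using DERIV_divide[OF V_deriv V_deriv] S_pos unfolding S_def S'_def
    by (intro DERIV_imp_deriv) simp
  ultimately show ?thesis
    unfolding S_eq by (simp add: V_def divide_nonpos_nonneg)
qed

definition welfare_coeff ::
    "nat \<Rightarrow> (nat \<Rightarrow> (nat \<Rightarrow> 'b) \<Rightarrow> real) \<Rightarrow> (nat \<Rightarrow> real) \<Rightarrow> (nat \<Rightarrow> (nat \<Rightarrow> 'b)) \<Rightarrow> nat \<Rightarrow> real"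
  where "welfare_coeff n u lam a k = (\<Sum>i<n. lam i * u i (a ((i + k) mod n)))"

definition rotate_seq :: "nat \<Rightarrow> nat \<Rightarrow> (nat \<Rightarrow> 'a) \<Rightarrow> nat \<Rightarrow> 'a"
  where "rotate_seq n m a = restrict (\<lambda>j. a ((j + m) mod n)) {..<n}"

lemma Wlam_eq_discounted_mean:
  "Wlam n u lam a x = (\<Sum>k<n. x ^ k * welfare_coeff n u lam a k) / (\<Sum>k<n. x ^ k)"
proof -
  have "Wlam n u lam a x =
      (\<Sum>i<n. lam i * (\<Sum>k<n. x ^ k * u i (a ((i + k) mod n)))) / (\<Sum>k<n. x ^ k)"
    unfolding Wlam_def vval_def times_divide_eq_right sum_divide_distrib[symmetric] ..
  also have "(\<Sum>i<n. lam i * (\<Sum>k<n. x ^ k * u i (a ((i + k) mod n)))) =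
      (\<Sum>k<n. x ^ k * welfare_coeff n u lam a k)"
    unfolding welfare_coeff_def sum_distrib_left
    by (subst sum.swap) (auto intro!: sum.cong simp: algebra_simps)
  finally show ?thesis .
qed

lemma rotate_seq_in_seqs:
  assumes "a \<in> seqs n As" "0 < n"
  shows "rotate_seq n m a \<in> seqs n As"
  unfolding rotate_seq_def seqs_def restrict_PiE_iff
  using assms PiE_mem[of a "{..<n}" "\<lambda>_. profiles n As"] by (simp add: seqs_def)

lemma welfare_coeff_rotate_seq:
  assumes "0 < n"
  shows "welfare_coeff n u lam (rotate_seq n m a) k = welfare_coeff n u lam a ((k + m) mod n)"
proof -
  have "((i + k) mod n + m) mod n = (i + (k + m) mod n) mod n" for i
    by (metis add.assoc mod_add_left_eq mod_add_right_eq)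
  then show ?thesis
    using assms by (simp add: welfare_coeff_def rotate_seq_def)
qed

theorem lemma2:
  fixes n :: nat and As :: "nat \<Rightarrow> 'b set"
    and u :: "nat \<Rightarrow> (nat \<Rightarrow> 'b) \<Rightarrow> real" and lam :: "nat \<Rightarrow> real"
    and \<Delta> :: real and a :: "nat \<Rightarrow> (nat \<Rightarrow> 'b)"
  assumes "n \<ge> 2"
    and "\<And>i. i < n \<Longrightarrow> finite (As i) \<and> As i \<noteq> {}"
    and "\<exists>i<n. lam i \<noteq> 0"
    and "0 < \<Delta>" and "\<Delta> < 1"
    and "a \<in> maximizers n As u lam \<Delta>"
  shows "deriv (\<lambda>d. Wlam n u lam a d) \<Delta> \<le> 0"
proof -
  \<comment> \<open>Finiteness of the action sets and \<open>\<lambda> \<noteq> 0\<close> only matter for the existence of maximizers.\<close>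
  define c where "c = welfare_coeff n u lam a"
  have "0 < n" using \<open>n \<ge> 2\<close> by simp
  have S_pos: "0 < (\<Sum>k<n. \<Delta> ^ k)"
    using \<open>0 < n\<close> \<open>0 < \<Delta>\<close> by (auto intro!: sum_pos)
  have "(\<Sum>k<n. \<Delta> ^ k * c ((k + m) mod n)) \<le> (\<Sum>k<n. \<Delta> ^ k * c k)" for m
  proof -
    have "Wlam n u lam (rotate_seq n m a) \<Delta> \<le> Wlam n u lam a \<Delta>"
      using assms(6) rotate_seq_in_seqs[OF _ \<open>0 < n\<close>] unfolding maximizers_def by blast
    then show ?thesis
      using S_pos unfolding Wlam_eq_discounted_mean welfare_coeff_rotate_seq[OF \<open>0 < n\<close>] c_def
      by (simp add: divide_le_cancel)
  qed
  then show ?thesis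
    unfolding Wlam_eq_discounted_mean c_def[symmetric]
    by (rule deriv_discounted_mean_nonpos[OF \<open>0 < \<Delta>\<close> \<open>\<Delta> < 1\<close> \<open>0 < n\<close>])
qed

end
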